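(* Let $(\sigma,\rho)$ and $(\nu,\varrho)$ be two $G$-compatible pairs. The lattices $L_{(\sigma,\rho)}=\sigma^{-1}\mathbb Z^n\rtimes_\eta\rho\mathbb Z^m$ and $L_{(\nu,\varrho)}=\nu^{-1}\mathbb Z^n\rtimes_\eta\varrho\mathbb Z^m$ are commensurable if and only if $\nu\sigma^{-1}\in GL_n(\mathbb Q)$ and $\varrho^{-1}\rho\in GL_m(\mathbb Q)$.
   Context: Fix integers $1\le m\le n$. Let $\Delta_1,\dots,\Delta_m\in\mathbb R^{n\times n}$ be linearly independent, nonsingular, traceless diagonal matrices $\Delta_i=\mathrm{diag}(d_1^{(i)},\dots,d_n^{(i)})$ such that for each $i$, $d_k^{(i)}\neq d_j^{(i)}$ whenever $k\neq j$. For $t=(t_1,\dots,t_m)^T\in\mathbb R^m$ write $t\cdot\Delta=\sum_{i=1}^m t_i\Delta_i$ and $\eta(t)=e^{t\cdot\Delta}$. Let $G=\mathbb R^n\rtimes_\eta\mathbb R^m$ be the Lie group with underlying set $\mathbb R^n\times\mathbb R^m$ and multiplication $(x,t)(y,s)=(x+e^{t\cdot\Delta}y,\ t+s)$. A pair $(\sigma,\rho)\in GL_n(\mathbb R)\times GL_m(\mathbb R)$ is called $G$-compatible if $\sigma\exp(\rho^{(j)}\cdot\Delta)\sigma^{-1}\in SL_n(\mathbb Z)$ for all $j=1,\dots,m$, where $\rho^{(j)}$ is the $j$-th column of $\rho$. For such a pair, $\sigma^{-1}\mathbb Z^n\rtimes_\eta\rho\mathbb Z^m$ denotes the subgroup $\{(\sigma^{-1}v,\rho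 p): v\in\mathbb Z^n, p\in\mathbb Z^m\}$ of $G$, which is a lattice. Two lattices $\Gamma,\Gamma'$ in $G$ are commensurable if $[\Gamma:\Gamma\cap\Gamma']<\infty$ and $[\Gamma':\Gamma\cap\Gamma']<\infty$. *)

theory Defs
  imports "HOL-Analysis.Analysis"
begin

definition is_diag_mat :: "real^'n^'n \<Rightarrow> bool" where
  "is_diag_mat A \<longleftrightarrow> (\<forall>j k. j \<noteq> k \<longrightarrow> A $ j $ k = 0)"

text \<open>eta(t) = exp(t . Delta) for diagonal Delta_i; the exponential of the diagonal
  matrix t . Delta is the diagonal matrix of the exponentials of its diagonal entries.\<close>
definition eta :: "('m::finite \<Rightarrow> real^'n^'n) \<Rightarrow> real^'m \<Rightarrow> real^'n^'n" where
  "eta \<Delta> t = (\<chi> j k. if j = k then exp (\<Sum>i\<in>UNIV. t $ i * \<Delta> i $ j $ j) else 0)"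

definition Gmult :: "('m::finite \<Rightarrow> real^'n^'n) \<Rightarrow> ((real^'n) \<times> (real^'m))
     \<Rightarrow> ((real^'n) \<times> (real^'m)) \<Rightarrow> ((real^'n) \<times> (real^'m))" where
  "Gmult \<Delta> a b = (fst a + eta \<Delta> (snd a) *v fst b, snd a + snd b)"

definition int_vec :: "real^'k \<Rightarrow> bool" where
  "int_vec v \<longleftrightarrow> (\<forall>k. v $ k \<in> \<int>)"

definition in_SL_Z :: "real^'n^'n \<Rightarrow> bool" where
  "in_SL_Z A \<longleftrightarrow> (\<forall>j k. A $ j $ k \<in> \<int>) \<and> det A = 1"

definition rat_mat :: "real^'n^'n \<Rightarrow> bool" where
  "rat_mat A \<longleftrightarrow> (\<forall>j k. A $ j $ k \<in> \<rat>)"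

definition G_compatible :: "('m::finite \<Rightarrow> real^'n^'n) \<Rightarrow> real^'n^'n \<Rightarrow> real^'m^'m \<Rightarrow> bool" where
  "G_compatible \<Delta> \<sigma> \<rho> \<longleftrightarrow> invertible \<sigma> \<and> invertible \<rho> \<and>
     (\<forall>j. in_SL_Z (\<sigma> ** eta \<Delta> (column j \<rho>) ** matrix_inv \<sigma>))"

definition lattice :: "real^'n^'n \<Rightarrow> real^'m^'m \<Rightarrow> ((real^'n) \<times> (real^'m)) set" where
  "lattice \<sigma> \<rho> = {(matrix_inv \<sigma> *v v, \<rho> *v p) | v p. int_vec v \<and> int_vec p}"

definition lcosets :: "('a \<Rightarrow> 'a \<Rightarrow> 'a) \<Rightarrow> 'a set \<Rightarrow> 'a set \<Rightarrow> 'a set set" where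
  "lcosets gmul A H = {(\<lambda>h. gmul a h) ` H | a. a \<in> A}"

definition commensurable :: "('a \<Rightarrow> 'a \<Rightarrow> 'a) \<Rightarrow> 'a set \<Rightarrow> 'a set \<Rightarrow> bool" where
  "commensurable gmul \<Gamma> \<Gamma>' \<longleftrightarrow>
     finite (lcosets gmul \<Gamma> (\<Gamma> \<inter> \<Gamma>')) \<and> finite (lcosets gmul \<Gamma>' (\<Gamma> \<inter> \<Gamma>'))"

end

theory Submission
  imports Defs
begin

(*
  L(sigma, rho) = sigma^-1 Z^n x| rho Z^m is the set of (x, t) with sigma x in Z^n and
  rho^-1 t in Z^m.  It is a subgroup of G because G-compatibility makes the conjugate
  sigma exp(t . Delta) sigma^-1 integral for every t in rho Z^m: these conjugates form the
  group generated by the sigma exp(rho^(j) . Delta) sigma^-1, which lie in SL_n(Z).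

  If H = L(sigma, rho) /\ L(nu, varrho) has finite index in L(sigma, rho), then by the
  pigeonhole principle some nonzero multiple of (sigma^-1 e_l, 0) and of (0, rho e_l) lies
  in L(nu, varrho), i.e. the columns of nu sigma^-1 and varrho^-1 rho have nonzero integral
  multiples, so these matrices are rational.

  Conversely, let d nu sigma^-1 and d' varrho^-1 rho be integral.  If two elements
  (x, t), (y, s) of L(sigma, rho) have sigma x = sigma y mod d and rho^-1 t = rho^-1 s
  mod d', then (y, s)^-1 (x, t) lies in L(nu, varrho), so the finitely many residue classes
  bound the number of cosets of H.  Rationality of nu sigma^-1 and varrho^-1 rho passes to
  their inverses, so the argument applies with the two lattices exchanged.
*)

section \<open>Integral and rational matrices\<close>

lemma matrix_inv_right:
  fixes A :: "'a::semiring_1^'n^'m"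
  assumes "invertible A"
  shows "A ** matrix_inv A = mat 1"
  using someI_ex[OF assms[unfolded invertible_def]] unfolding matrix_inv_def by blast

lemma matrix_inv_left:
  fixes A :: "'a::semiring_1^'n^'m"
  assumes "invertible A"
  shows "matrix_inv A ** A = mat 1"
  using someI_ex[OF assms[unfolded invertible_def]] unfolding matrix_inv_def by blast

lemma matrix_inv_mult_cancel_left:
  fixes A :: "'a::semiring_1^'n^'m"
  assumes "invertible A"
  shows "matrix_inv A ** (A ** B) = B"
  by (simp add: matrix_mul_assoc matrix_inv_left[OF assms])

lemma matrix_vector_mult_uminus_right: "(A :: 'a::ring_1^'n^'m) *v (- x) = - (A *v x)"
  by (simp add: matrix_vector_mult_def vec_eq_iff sum_negf)

definition int_mat :: "real^'n^'m \<Rightarrow> bool" where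
  "int_mat A \<longleftrightarrow> (\<forall>j k. A $ j $ k \<in> \<int>)"

lemma int_mat_mat_1: "int_mat (mat 1)"
  unfolding int_mat_def mat_def by simp

lemma int_mat_mult: "int_mat A \<Longrightarrow> int_mat B \<Longrightarrow> int_mat (A ** B)"
  unfolding int_mat_def matrix_matrix_mult_def by (auto intro!: Ints_sum Ints_mult)

lemma int_vec_matrix_vector_mult: "int_mat A \<Longrightarrow> int_vec v \<Longrightarrow> int_vec (A *v v)"
  unfolding int_mat_def int_vec_def matrix_vector_mult_def by (auto intro!: Ints_sum Ints_mult)

lemma int_vec_add: "int_vec u \<Longrightarrow> int_vec v \<Longrightarrow> int_vec (u + v)"
  unfolding int_vec_def by simp

lemma int_vec_uminus: "int_vec v \<Longrightarrow> int_vec (- v)"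
  unfolding int_vec_def by simp

lemma det_Ints: "int_mat A \<Longrightarrow> det A \<in> \<int>"
  unfolding int_mat_def det_def by (auto intro!: Ints_sum Ints_mult Ints_prod)

lemma det_Rats: "rat_mat A \<Longrightarrow> det A \<in> \<rat>"
  unfolding rat_mat_def det_def by (auto intro!: Rats_sum Rats_mult Rats_prod)

lemma inverse_entry_cramer:
  fixes A B :: "real^'n^'n"
  assumes "A ** B = mat 1"
  shows "B $ k $ l * det A = det (\<chi> i j. if j = k then axis l 1 $ i else A $ i $ j)"
proof -
  have "A *v column l B = axis l 1"
    by (metis assms matrix_vector_mul_assoc matrix_vector_mul_lid matrix_vector_mult_basis)
  moreover have "det (\<chi> i j. if j = k then (A *v column l B) $ i else A $ i $ j) = column l B $ k * det A"
    by (rule cramer_lemma)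
  ultimately show ?thesis by (simp only:) (simp add: column_def)
qed

lemma int_mat_inverse:
  fixes A B :: "real^'n^'n"
  assumes "int_mat A" "det A = 1" "A ** B = mat 1"
  shows "int_mat B"
  unfolding int_mat_def
proof (intro allI)
  fix k l
  have "int_mat (\<chi> i j. if j = k then axis l 1 $ i else A $ i $ j :: real^'n^'n)"
    using assms(1) by (auto simp: int_mat_def axis_def)
  then show "B $ k $ l \<in> \<int>"
    using inverse_entry_cramer[OF assms(3), of k l] det_Ints assms(2) by force
qed

lemma rat_mat_inverse:
  fixes A B :: "real^'n^'n"
  assumes "rat_mat A" "A ** B = mat 1"
  shows "rat_mat B"
  unfolding rat_mat_def
proof (intro allI)
  fix k l
  let ?X = "\<chi> i j. if j = k then axis l 1 $ i else A $ i $ j :: real^'n^'n"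
  have "det A \<noteq> 0"
    using assms(2) invertible_det_nz invertible_right_inverse by blast
  then have "B $ k $ l = det ?X / det A"
    using inverse_entry_cramer[OF assms(2), of k l] by (simp add: eq_divide_eq)
  moreover have "rat_mat ?X"
    using assms(1) by (auto simp: rat_mat_def axis_def)
  ultimately show "B $ k $ l \<in> \<rat>"
    using det_Rats[of ?X] det_Rats[OF assms(1)] by (simp add: Rats_divide)
qed

lemma Rats_if_Ints_multiple:
  fixes c x :: real
  assumes "c \<in> \<int>" "c \<noteq> 0" "c * x \<in> \<int>"
  shows "x \<in> \<rat>"
proof -
  have "x = (c * x) / c" using assms(2) by simp
  then show ?thesis using assms(1,3) Ints_subset_Rats by (metis Rats_divide subsetD)
qed

lemma rat_mat_if_column_multiples:
  assumes "\<And>l. \<exists>c \<in> \<int>. c \<noteq> 0 \<and> int_vec (c *\<^sub>R column l A)"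
  shows "rat_mat A"
  unfolding rat_mat_def
proof (intro allI)
  fix j l
  obtain c where "c \<in> \<int>" "c \<noteq> 0" "int_vec (c *\<^sub>R column l A)" using assms by blast
  then show "A $ j $ l \<in> \<rat>"
    by (intro Rats_if_Ints_multiple[of c]) (auto simp: int_vec_def column_def)
qed

lemma Rats_common_denominator:
  assumes "finite I" "\<And>i. i \<in> I \<Longrightarrow> f i \<in> \<rat>"
  shows "\<exists>d::nat. d > 0 \<and> (\<forall>i\<in>I. real d * f i \<in> \<int>)"
  using assms
proof (induction I rule: finite_induct)
  case empty
  show ?case by (intro exI[of _ 1]) simp
next
  case (insert i I)
  then obtain d :: nat where d: "d > 0" "\<forall>i\<in>I. real d * f i \<in> \<int>" by auto
  obtain a b where ab: "f i = of_int a / of_int b" "b > 0"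
    using insert.prems Rats_cases' by (metis insertI1)
  have "real (d * nat b) * f i = of_int (int d * a)" using ab by simp
  then have "real (d * nat b) * f i \<in> \<int>" by (simp only: Ints_of_int)
  moreover have "real (d * nat b) * f j \<in> \<int>" if "j \<in> I" for j
  proof -
    have "real (d * nat b) * f j = real (nat b) * (real d * f j)" by simp
    then show ?thesis using d(2) that by (metis Ints_mult Ints_of_nat)
  qed
  moreover have "d * nat b > 0" using d(1) ab(2) by simp
  ultimately show ?case by blast
qed

lemma rat_mat_imp_int_multiple:
  assumes "rat_mat (A :: real^'n^'n)"
  shows "\<exists>d::nat. d > 0 \<and> int_mat (real d *\<^sub>R A)"
proof -
  obtain d :: nat where "d > 0" "\<forall>(j, k) \<in> UNIV. real d * A $ j $ k \<in> \<int>"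
    using Rats_common_denominator[of UNIV "\<lambda>(j, k). A $ j $ k"] assms
    by (auto simp: rat_mat_def split: prod.splits)
  then show ?thesis by (auto simp: int_mat_def)
qed

lemma diff_eq_scaleR_if_mod_eq:
  assumes "int_vec u" "int_vec v" "(\<lambda>k. \<lfloor>u $ k\<rfloor> mod int d) = (\<lambda>k. \<lfloor>v $ k\<rfloor> mod int d)"
  shows "\<exists>z. int_vec z \<and> u - v = real d *\<^sub>R z"
proof
  let ?z = "\<chi> k. of_int ((\<lfloor>u $ k\<rfloor> - \<lfloor>v $ k\<rfloor>) div int d) :: real^'a"
  have "u $ k - v $ k = real d * ?z $ k" for k
  proof -
    have "int d dvd \<lfloor>u $ k\<rfloor> - \<lfloor>v $ k\<rfloor>"
      using assms(3) mod_eq_dvd_iff by meson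
    then have "\<lfloor>u $ k\<rfloor> - \<lfloor>v $ k\<rfloor> = int d * ((\<lfloor>u $ k\<rfloor> - \<lfloor>v $ k\<rfloor>) div int d)" by simp
    moreover have "u $ k = of_int \<lfloor>u $ k\<rfloor>" "v $ k = of_int \<lfloor>v $ k\<rfloor>"
      using assms(1,2) by (simp_all add: int_vec_def)
    ultimately show ?thesis by (metis of_int_diff of_int_mult of_int_of_nat_eq vec_lambda_beta)
  qed
  then show "int_vec ?z \<and> u - v = real d *\<^sub>R ?z" by (simp add: int_vec_def vec_eq_iff)
qed

section \<open>The group G and its cosets\<close>

lemma diagonal_matrix_mult:
  "(\<chi> j k. if j = k then f j else 0) ** (\<chi> j k. if j = k then g j else 0)
     = (\<chi> j k. if j = k then f j * g j else (0::'a::semiring_1))"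
proof -
  have "(if j = k then f j else 0) * (if k = l then g k else 0)
      = (if k = j then (if j = l then f j * g j else 0) else (0::'a))" for j k l
    by simp
  then show ?thesis by (simp add: matrix_matrix_mult_def vec_eq_iff)
qed

lemma eta_add: "eta \<Delta> (s + t) = eta \<Delta> s ** eta \<Delta> t"
  unfolding eta_def diagonal_matrix_mult by (simp add: distrib_right sum.distrib exp_add cong: if_cong)

lemma eta_zero: "eta \<Delta> 0 = mat 1"
  unfolding eta_def by (simp add: vec_eq_iff mat_def)

definition Ginv :: "('m::finite \<Rightarrow> real^'n^'n) \<Rightarrow> (real^'n) \<times> (real^'m) \<Rightarrow> (real^'n) \<times> (real^'m)" where
  "Ginv \<Delta> a = (- (eta \<Delta> (- snd a) *v fst a), - snd a)"

lemma Gmult_assoc: "Gmult \<Delta> (Gmult \<Delta> a b) c = Gmult \<Delta> a (Gmult \<Delta> b c)"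
  by (simp add: Gmult_def eta_add matrix_vector_right_distrib matrix_vector_mul_assoc add.assoc)

lemma Gmult_zero_left: "Gmult \<Delta> (0, 0) a = a"
  by (simp add: Gmult_def eta_zero)

lemma Gmult_zero_right: "Gmult \<Delta> a (0, 0) = a"
  by (simp add: Gmult_def)

lemma Gmult_Ginv_left: "Gmult \<Delta> (Ginv \<Delta> a) a = (0, 0)"
  by (simp add: Gmult_def Ginv_def)

lemma Gmult_Ginv_right: "Gmult \<Delta> a (Ginv \<Delta> a) = (0, 0)"
  by (simp add: Gmult_def Ginv_def matrix_vector_mult_uminus_right matrix_vector_mul_assoc
      eta_zero flip: eta_add)

definition Gsubgroup :: "('m::finite \<Rightarrow> real^'n^'n) \<Rightarrow> ((real^'n) \<times> (real^'m)) set \<Rightarrow> bool" where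
  "Gsubgroup \<Delta> H \<longleftrightarrow> (0, 0) \<in> H \<and> (\<forall>a\<in>H. \<forall>b\<in>H. Gmult \<Delta> a b \<in> H) \<and> (\<forall>a\<in>H. Ginv \<Delta> a \<in> H)"

lemma Gsubgroup_Int: "Gsubgroup \<Delta> H \<Longrightarrow> Gsubgroup \<Delta> K \<Longrightarrow> Gsubgroup \<Delta> (H \<inter> K)"
  by (simp add: Gsubgroup_def)

lemma Gmult_image_Gsubgroup:
  assumes "Gsubgroup \<Delta> H" "h \<in> H"
  shows "Gmult \<Delta> h ` H = H"
proof
  show "Gmult \<Delta> h ` H \<subseteq> H" using assms by (auto simp: Gsubgroup_def)
  show "H \<subseteq> Gmult \<Delta> h ` H"
  proof
    fix y assume "y \<in> H"
    then have "Gmult \<Delta> (Ginv \<Delta> h) y \<in> H" using assms by (simp add: Gsubgroup_def)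
    moreover have "y = Gmult \<Delta> h (Gmult \<Delta> (Ginv \<Delta> h) y)"
      by (simp add: Gmult_assoc[symmetric] Gmult_Ginv_right Gmult_zero_left)
    ultimately show "y \<in> Gmult \<Delta> h ` H" by blast
  qed
qed

lemma lcoset_eq_iff:
  assumes "Gsubgroup \<Delta> H"
  shows "Gmult \<Delta> a ` H = Gmult \<Delta> b ` H \<longleftrightarrow> Gmult \<Delta> (Ginv \<Delta> b) a \<in> H"
proof
  assume eq: "Gmult \<Delta> a ` H = Gmult \<Delta> b ` H"
  have "a \<in> Gmult \<Delta> a ` H"
    using assms Gmult_zero_right by (metis Gsubgroup_def image_eqI)
  then obtain h where "h \<in> H" "a = Gmult \<Delta> b h" using eq by auto
  moreover have "Gmult \<Delta> (Ginv \<Delta> b) (Gmult \<Delta> b h) = h"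
    by (simp add: Gmult_assoc[symmetric] Gmult_Ginv_left Gmult_zero_left)
  ultimately show "Gmult \<Delta> (Ginv \<Delta> b) a \<in> H" by simp
next
  assume h: "Gmult \<Delta> (Ginv \<Delta> b) a \<in> H"
  have "Gmult \<Delta> a ` H = Gmult \<Delta> (Gmult \<Delta> b (Gmult \<Delta> (Ginv \<Delta> b) a)) ` H"
    by (simp add: Gmult_assoc[symmetric] Gmult_Ginv_right Gmult_zero_left)
  also have "\<dots> = Gmult \<Delta> b ` (Gmult \<Delta> (Gmult \<Delta> (Ginv \<Delta> b) a) ` H)"
    by (simp add: image_image Gmult_assoc)
  also have "\<dots> = Gmult \<Delta> b ` H" using Gmult_image_Gsubgroup[OF assms h] by simp
  finally show "Gmult \<Delta> a ` H = Gmult \<Delta> b ` H" .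
qed

lemma finite_index_scaled_mem:
  assumes H: "Gsubgroup \<Delta> H" and fin: "finite (lcosets (Gmult \<Delta>) \<Gamma> H)"
    and mem: "\<And>j::nat. (of_nat j *\<^sub>R x, of_nat j *\<^sub>R t) \<in> \<Gamma>" and "x = 0 \<or> t = 0"
  shows "\<exists>c \<in> \<int>. c \<noteq> 0 \<and> (c *\<^sub>R x, c *\<^sub>R t) \<in> H"
proof -
  let ?a = "\<lambda>j::nat. (of_nat j *\<^sub>R x, of_nat j *\<^sub>R t)"
  \<comment> \<open>On \<open>\<real>\<^sup>n \<times> 0\<close> and \<open>0 \<times> \<real>\<^sup>m\<close> the product is vector addition, so \<open>?a j\<close> is the \<open>j\<close>-th power of \<open>(x, t)\<close>.\<close>
  have "range (\<lambda>j. Gmult \<Delta> (?a j) ` H) \<subseteq> lcosets (Gmult \<Delta>) \<Gamma> H"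
    using mem by (auto simp: lcosets_def)
  then have "\<not> inj (\<lambda>j. Gmult \<Delta> (?a j) ` H)"
    using fin finite_subset finite_imageD infinite_UNIV_nat by blast
  then obtain i j where "i < j" "Gmult \<Delta> (?a j) ` H = Gmult \<Delta> (?a i) ` H"
    unfolding inj_def by (metis linorder_neqE_nat)
  then have "Gmult \<Delta> (Ginv \<Delta> (?a i)) (?a j) \<in> H" using lcoset_eq_iff[OF H] by blast
  moreover have "Gmult \<Delta> (Ginv \<Delta> (?a i)) (?a j) = ((real j - real i) *\<^sub>R x, (real j - real i) *\<^sub>R t)"
    using \<open>x = 0 \<or> t = 0\<close> by (auto simp: Gmult_def Ginv_def eta_zero algebra_simps)
  ultimately show ?thesis using \<open>i < j\<close> by (intro bexI[of _ "real j - real i"]) auto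
qed

lemma finite_lcosets_if_fibres:
  assumes H: "Gsubgroup \<Delta> H" and fin: "finite (f ` \<Gamma>)"
    and fibre: "\<And>a b. a \<in> \<Gamma> \<Longrightarrow> b \<in> \<Gamma> \<Longrightarrow> f a = f b \<Longrightarrow> Gmult \<Delta> (Ginv \<Delta> b) a \<in> H"
  shows "finite (lcosets (Gmult \<Delta>) \<Gamma> H)"
proof -
  define rep where "rep y = (SOME b. b \<in> \<Gamma> \<and> f b = y)" for y
  have "lcosets (Gmult \<Delta>) \<Gamma> H \<subseteq> (\<lambda>y. Gmult \<Delta> (rep y) ` H) ` f ` \<Gamma>"
  proof
    fix C assume "C \<in> lcosets (Gmult \<Delta>) \<Gamma> H"
    then obtain a where a: "a \<in> \<Gamma>" "C = Gmult \<Delta> a ` H" by (auto simp: lcosets_def)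
    have "rep (f a) \<in> \<Gamma> \<and> f (rep (f a)) = f a"
      unfolding rep_def by (rule someI[of _ a]) (simp add: a(1))
    then have "C = Gmult \<Delta> (rep (f a)) ` H"
      using a fibre lcoset_eq_iff[OF H] by metis
    then show "C \<in> (\<lambda>y. Gmult \<Delta> (rep y) ` H) ` f ` \<Gamma>" using a(1) by blast
  qed
  then show ?thesis using fin finite_subset by blast
qed

section \<open>The lattices are subgroups\<close>

lemma mem_lattice_iff:
  fixes \<sigma> :: "real^'n^'n" and \<rho> :: "real^'m^'m"
  assumes "invertible \<sigma>" "invertible \<rho>"
  shows "(x, t) \<in> lattice \<sigma> \<rho> \<longleftrightarrow> int_vec (\<sigma> *v x) \<and> int_vec (matrix_inv \<rho> *v t)"
proof
  assume "(x, t) \<in> lattice \<sigma> \<rho>"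
  then obtain v p where "x = matrix_inv \<sigma> *v v" "t = \<rho> *v p" "int_vec v" "int_vec p"
    unfolding lattice_def by auto
  then show "int_vec (\<sigma> *v x) \<and> int_vec (matrix_inv \<rho> *v t)"
    by (simp add: matrix_vector_mul_assoc matrix_inv_right[OF assms(1)] matrix_inv_left[OF assms(2)])
next
  assume "int_vec (\<sigma> *v x) \<and> int_vec (matrix_inv \<rho> *v t)"
  moreover have "x = matrix_inv \<sigma> *v (\<sigma> *v x)" "t = \<rho> *v (matrix_inv \<rho> *v t)"
    by (simp_all add: matrix_vector_mul_assoc matrix_inv_left[OF assms(1)] matrix_inv_right[OF assms(2)])
  ultimately show "(x, t) \<in> lattice \<sigma> \<rho>" unfolding lattice_def by blast
qed

lemma conj_eta_add:
  fixes \<sigma> :: "real^'n^'n"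
  assumes "invertible \<sigma>"
  shows "\<sigma> ** eta \<Delta> (s + t) ** matrix_inv \<sigma> =
         (\<sigma> ** eta \<Delta> s ** matrix_inv \<sigma>) ** (\<sigma> ** eta \<Delta> t ** matrix_inv \<sigma>)"
proof -
  have "(\<sigma> ** eta \<Delta> s ** matrix_inv \<sigma>) ** (\<sigma> ** eta \<Delta> t ** matrix_inv \<sigma>)
      = \<sigma> ** eta \<Delta> s ** (matrix_inv \<sigma> ** \<sigma>) ** eta \<Delta> t ** matrix_inv \<sigma>"
    by (simp add: matrix_mul_assoc)
  also have "\<dots> = \<sigma> ** eta \<Delta> (s + t) ** matrix_inv \<sigma>"
    by (simp add: matrix_inv_left[OF assms] eta_add matrix_mul_assoc)
  finally show ?thesis by simp
qed

lemma of_int_scaleR_mem: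
  fixes S :: "'a::real_vector set"
  assumes zero: "0 \<in> S" and add: "\<And>x y. x \<in> S \<Longrightarrow> y \<in> S \<Longrightarrow> x + y \<in> S"
    and uminus: "\<And>x. x \<in> S \<Longrightarrow> - x \<in> S" and x: "x \<in> S"
  shows "of_int k *\<^sub>R x \<in> S"
proof (induction k rule: int_induct[where k = 0])
  case base
  show ?case using zero by simp
next
  case (step1 i)
  have "of_int (i + 1) *\<^sub>R x = of_int i *\<^sub>R x + x" by (simp add: algebra_simps)
  then show ?case using add[OF step1(2) x] by simp
next
  case (step2 i)
  have "of_int (i - 1) *\<^sub>R x = of_int i *\<^sub>R x + - x" by (simp add: algebra_simps)
  then show ?case using add[OF step2(2) uminus[OF x]] by simp
qed

lemma Ints_combination_mem:
  fixes S :: "'a::real_vector set"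
  assumes zero: "0 \<in> S" and add: "\<And>x y. x \<in> S \<Longrightarrow> y \<in> S \<Longrightarrow> x + y \<in> S"
    and uminus: "\<And>x. x \<in> S \<Longrightarrow> - x \<in> S"
    and "\<And>i. v i \<in> S" "\<And>i. c i \<in> \<int>"
  shows "(\<Sum>i\<in>I. c i *\<^sub>R v i) \<in> S"
proof (induction I rule: infinite_finite_induct)
  case (insert i I)
  obtain k where "c i = of_int k" using \<open>c i \<in> \<int>\<close> by (rule Ints_cases)
  then have "c i *\<^sub>R v i \<in> S" using of_int_scaleR_mem[OF zero add uminus \<open>v i \<in> S\<close>] by simp
  then show ?case using insert add by simp
qed (simp_all add: zero)

lemma int_mat_conj_eta:
  fixes \<sigma> :: "real^'n^'n" and \<rho> :: "real^'m^'m"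
  assumes comp: "G_compatible \<Delta> \<sigma> \<rho>" and p: "int_vec p"
  shows "int_mat (\<sigma> ** eta \<Delta> (\<rho> *v p) ** matrix_inv \<sigma>)"
proof -
  have \<sigma>: "invertible \<sigma>" using comp by (simp add: G_compatible_def)
  define C where "C t = \<sigma> ** eta \<Delta> t ** matrix_inv \<sigma>" for t
  have C_add: "C (s + t) = C s ** C t" for s t
    unfolding C_def by (rule conj_eta_add[OF \<sigma>])
  have C_zero: "C 0 = mat 1"
    by (simp add: C_def eta_zero matrix_inv_right[OF \<sigma>])
  define S where "S = {t. int_mat (C t) \<and> int_mat (C (- t))}"
  have "0 \<in> S" by (simp add: S_def C_zero int_mat_mat_1)
  moreover have "s + t \<in> S" if "s \<in> S" "t \<in> S" for s t
    using that C_add[of "- s" "- t"] by (simp add: S_def C_add int_mat_mult)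
  moreover have "- t \<in> S" if "t \<in> S" for t
    using that by (simp add: S_def)
  moreover have "column j \<rho> \<in> S" for j
  proof -
    have "in_SL_Z (C (column j \<rho>))" using comp by (simp add: G_compatible_def C_def)
    moreover have "C (column j \<rho>) ** C (- column j \<rho>) = mat 1"
      by (simp add: C_zero flip: C_add)
    ultimately show ?thesis
      using int_mat_inverse by (auto simp: S_def in_SL_Z_def int_mat_def)
  qed
  ultimately have "(\<Sum>j\<in>UNIV. p $ j *\<^sub>R column j \<rho>) \<in> S"
    using p by (intro Ints_combination_mem) (auto simp: int_vec_def)
  then show ?thesis by (simp add: S_def C_def matrix_mult_sum scalar_mult_eq_scaleR)
qed

lemma Gsubgroup_lattice:
  fixes \<sigma> :: "real^'n^'n" and \<rho> :: "real^'m^'m"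
  assumes comp: "G_compatible \<Delta> \<sigma> \<rho>"
  shows "Gsubgroup \<Delta> (lattice \<sigma> \<rho>)"
proof -
  have inv: "invertible \<sigma>" "invertible \<rho>" using comp by (auto simp: G_compatible_def)
  have conj_int: "int_mat (\<sigma> ** eta \<Delta> t ** matrix_inv \<sigma>)" if "int_vec (matrix_inv \<rho> *v t)" for t
    using int_mat_conj_eta[OF comp that]
    by (simp add: matrix_vector_mul_assoc matrix_inv_right[OF inv(2)])
  have shift: "\<sigma> *v (eta \<Delta> t *v y) = (\<sigma> ** eta \<Delta> t ** matrix_inv \<sigma>) *v (\<sigma> *v y)" for t y
    by (simp add: matrix_vector_mul_assoc matrix_inv_left[OF inv(1)] flip: matrix_mul_assoc)
  show ?thesis
    unfolding Gsubgroup_def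
  proof (intro conjI ballI)
    show "(0, 0) \<in> lattice \<sigma> \<rho>" by (simp add: mem_lattice_iff[OF inv] int_vec_def)
  next
    fix a b assume "a \<in> lattice \<sigma> \<rho>" "b \<in> lattice \<sigma> \<rho>"
    then obtain x t y s where a: "a = (x, t)" "int_vec (\<sigma> *v x)" "int_vec (matrix_inv \<rho> *v t)"
      and b: "b = (y, s)" "int_vec (\<sigma> *v y)" "int_vec (matrix_inv \<rho> *v s)"
      by (cases a, cases b) (auto simp: mem_lattice_iff[OF inv])
    have "int_vec (\<sigma> *v (x + eta \<Delta> t *v y))"
      using a b conj_int by (simp add: matrix_vector_right_distrib shift int_vec_add int_vec_matrix_vector_mult)
    moreover have "int_vec (matrix_inv \<rho> *v (t + s))"
      using a b by (simp add: matrix_vector_right_distrib int_vec_add)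
    ultimately show "Gmult \<Delta> a b \<in> lattice \<sigma> \<rho>"
      using a b by (simp add: Gmult_def mem_lattice_iff[OF inv])
  next
    fix a assume "a \<in> lattice \<sigma> \<rho>"
    then obtain x t where a: "a = (x, t)" "int_vec (\<sigma> *v x)" "int_vec (matrix_inv \<rho> *v t)"
      by (cases a) (auto simp: mem_lattice_iff[OF inv])
    then have t: "int_vec (matrix_inv \<rho> *v (- t))"
      by (simp add: matrix_vector_mult_uminus_right int_vec_uminus)
    then have "int_vec (\<sigma> *v (- (eta \<Delta> (- t) *v x)))"
      using a conj_int by (simp add: matrix_vector_mult_uminus_right shift int_vec_uminus int_vec_matrix_vector_mult)
    with t show "Ginv \<Delta> a \<in> lattice \<sigma> \<rho>"
      using a by (simp add: Ginv_def mem_lattice_iff[OF inv])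
  qed
qed

lemma rat_mat_if_finite_index:
  fixes \<sigma> \<nu> :: "real^'n^'n" and \<rho> \<rho>' :: "real^'m^'m"
  assumes comp1: "G_compatible \<Delta> \<sigma> \<rho>" and comp2: "G_compatible \<Delta> \<nu> \<rho>'"
    and fin: "finite (lcosets (Gmult \<Delta>) (lattice \<sigma> \<rho>) (lattice \<sigma> \<rho> \<inter> lattice \<nu> \<rho>'))"
  shows "rat_mat (\<nu> ** matrix_inv \<sigma>) \<and> rat_mat (matrix_inv \<rho>' ** \<rho>)"
proof
  have inv: "invertible \<sigma>" "invertible \<rho>" using comp1 by (auto simp: G_compatible_def)
  have inv': "invertible \<nu>" "invertible \<rho>'" using comp2 by (auto simp: G_compatible_def)
  have H: "Gsubgroup \<Delta> (lattice \<sigma> \<rho> \<inter> lattice \<nu> \<rho>')"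
    by (intro Gsubgroup_Int Gsubgroup_lattice comp1 comp2)
  note scaled_mem = finite_index_scaled_mem[OF H fin]
  show "rat_mat (\<nu> ** matrix_inv \<sigma>)"
  proof (rule rat_mat_if_column_multiples)
    fix l
    let ?x = "matrix_inv \<sigma> *v axis l 1"
    have "(of_nat j *\<^sub>R ?x, of_nat j *\<^sub>R 0) \<in> lattice \<sigma> \<rho>" for j
      by (simp add: mem_lattice_iff[OF inv] matrix_vector_mult_scaleR matrix_vector_mul_assoc
          matrix_inv_right[OF inv(1)] int_vec_def axis_def)
    then obtain c where "c \<in> \<int>" "c \<noteq> 0" "int_vec (\<nu> *v (c *\<^sub>R ?x))"
      using scaled_mem mem_lattice_iff[OF inv'] by blast
    moreover have "\<nu> *v (c *\<^sub>R ?x) = c *\<^sub>R column l (\<nu> ** matrix_inv \<sigma>)"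
      by (simp add: matrix_vector_mult_scaleR matrix_vector_mul_assoc flip: matrix_vector_mult_basis)
    ultimately show "\<exists>c \<in> \<int>. c \<noteq> 0 \<and> int_vec (c *\<^sub>R column l (\<nu> ** matrix_inv \<sigma>))" by auto
  qed
  show "rat_mat (matrix_inv \<rho>' ** \<rho>)"
  proof (rule rat_mat_if_column_multiples)
    fix l
    let ?t = "\<rho> *v axis l 1"
    have "(of_nat j *\<^sub>R 0, of_nat j *\<^sub>R ?t) \<in> lattice \<sigma> \<rho>" for j
      by (simp add: mem_lattice_iff[OF inv] matrix_vector_mult_scaleR matrix_vector_mul_assoc
          matrix_inv_left[OF inv(2)] int_vec_def axis_def)
    then obtain c where "c \<in> \<int>" "c \<noteq> 0" "int_vec (matrix_inv \<rho>' *v (c *\<^sub>R ?t))"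
      using scaled_mem mem_lattice_iff[OF inv'] by blast
    moreover have "matrix_inv \<rho>' *v (c *\<^sub>R ?t) = c *\<^sub>R column l (matrix_inv \<rho>' ** \<rho>)"
      by (simp add: matrix_vector_mult_scaleR matrix_vector_mul_assoc flip: matrix_vector_mult_basis)
    ultimately show "\<exists>c \<in> \<int>. c \<noteq> 0 \<and> int_vec (c *\<^sub>R column l (matrix_inv \<rho>' ** \<rho>))" by auto
  qed
qed

lemma Ginv_mult_mem_lattice_if_congruent:
  fixes \<sigma> \<nu> :: "real^'n^'n" and \<rho> \<rho>' :: "real^'m^'m"
  assumes comp: "G_compatible \<Delta> \<sigma> \<rho>" and inv': "invertible \<nu>" "invertible \<rho>'"
    and M: "int_mat (real d *\<^sub>R (\<nu> ** matrix_inv \<sigma>))"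
    and N: "int_mat (real d' *\<^sub>R (matrix_inv \<rho>' ** \<rho>))"
    and s: "int_vec (matrix_inv \<rho> *v s)"
    and z: "int_vec z" "\<sigma> *v x - \<sigma> *v y = real d *\<^sub>R z"
    and z': "int_vec z'" "matrix_inv \<rho> *v t - matrix_inv \<rho> *v s = real d' *\<^sub>R z'"
  shows "Gmult \<Delta> (Ginv \<Delta> (y, s)) (x, t) \<in> lattice \<nu> \<rho>'"
proof -
  have inv: "invertible \<sigma>" "invertible \<rho>" using comp by (auto simp: G_compatible_def)
  let ?C = "\<sigma> ** eta \<Delta> (- s) ** matrix_inv \<sigma>"
  have "- s = \<rho> *v (- (matrix_inv \<rho> *v s))"
    by (simp add: matrix_vector_mult_uminus_right matrix_vector_mul_assoc matrix_inv_right[OF inv(2)])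
  then have C: "int_mat ?C"
    using int_mat_conj_eta[OF comp int_vec_uminus[OF s]] by simp
  have "\<nu> *v (eta \<Delta> (- s) *v (x - y)) = (\<nu> ** matrix_inv \<sigma>) *v (?C *v (\<sigma> *v x - \<sigma> *v y))"
    by (simp add: matrix_vector_mul_assoc matrix_inv_left[OF inv(1)] matrix_inv_mult_cancel_left[OF inv(1)]
        flip: matrix_vector_mult_diff_distrib matrix_mul_assoc)
  also have "\<dots> = (real d *\<^sub>R (\<nu> ** matrix_inv \<sigma>)) *v (?C *v z)"
    by (simp add: z(2) matrix_vector_mult_scaleR flip: scaleR_matrix_vector_assoc)
  finally have x_part: "int_vec (\<nu> *v (eta \<Delta> (- s) *v (x - y)))"
    using M C z(1) by (simp add: int_vec_matrix_vector_mult)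
  have "matrix_inv \<rho>' *v (t - s) = (matrix_inv \<rho>' ** \<rho>) *v (matrix_inv \<rho> *v t - matrix_inv \<rho> *v s)"
    by (simp add: matrix_vector_mul_assoc matrix_inv_right[OF inv(2)]
        flip: matrix_vector_mult_diff_distrib matrix_mul_assoc)
  also have "\<dots> = (real d' *\<^sub>R (matrix_inv \<rho>' ** \<rho>)) *v z'"
    by (simp add: z'(2) matrix_vector_mult_scaleR flip: scaleR_matrix_vector_assoc)
  finally have t_part: "int_vec (matrix_inv \<rho>' *v (t - s))"
    using N z'(1) by (simp add: int_vec_matrix_vector_mult)
  have "Gmult \<Delta> (Ginv \<Delta> (y, s)) (x, t) = (eta \<Delta> (- s) *v (x - y), t - s)"
    by (simp add: Gmult_def Ginv_def matrix_vector_mult_diff_distrib)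
  then show ?thesis using x_part t_part mem_lattice_iff[OF inv'] by simp
qed

lemma finite_index_if_rat_mat:
  fixes \<sigma> \<nu> :: "real^'n^'n" and \<rho> \<rho>' :: "real^'m^'m"
  assumes comp1: "G_compatible \<Delta> \<sigma> \<rho>" and comp2: "G_compatible \<Delta> \<nu> \<rho>'"
    and "rat_mat (\<nu> ** matrix_inv \<sigma>)" "rat_mat (matrix_inv \<rho>' ** \<rho>)"
  shows "finite (lcosets (Gmult \<Delta>) (lattice \<sigma> \<rho>) (lattice \<sigma> \<rho> \<inter> lattice \<nu> \<rho>'))"
proof -
  have inv: "invertible \<sigma>" "invertible \<rho>" using comp1 by (auto simp: G_compatible_def)
  have inv': "invertible \<nu>" "invertible \<rho>'" using comp2 by (auto simp: G_compatible_def)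
  obtain d :: nat where d: "d > 0" "int_mat (real d *\<^sub>R (\<nu> ** matrix_inv \<sigma>))"
    using rat_mat_imp_int_multiple assms(3) by blast
  obtain d' :: nat where d': "d' > 0" "int_mat (real d' *\<^sub>R (matrix_inv \<rho>' ** \<rho>))"
    using rat_mat_imp_int_multiple assms(4) by blast
  define f where "f a = ((\<lambda>k. \<lfloor>(\<sigma> *v fst a) $ k\<rfloor> mod int d),
                         (\<lambda>k. \<lfloor>(matrix_inv \<rho> *v snd a) $ k\<rfloor> mod int d'))" for a
  have "f ` lattice \<sigma> \<rho> \<subseteq> (UNIV \<rightarrow>\<^sub>E {0..<int d}) \<times> (UNIV \<rightarrow>\<^sub>E {0..<int d'})"
    using d(1) d'(1) by (auto simp: f_def PiE_UNIV_domain)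
  then have "finite (f ` lattice \<sigma> \<rho>)"
    by (rule finite_subset) (intro finite_cartesian_product finite_PiE; simp)
  then show ?thesis
  proof (rule finite_lcosets_if_fibres[OF Gsubgroup_Int[OF Gsubgroup_lattice[OF comp1] Gsubgroup_lattice[OF comp2]]])
    fix a b assume a: "a \<in> lattice \<sigma> \<rho>" and b: "b \<in> lattice \<sigma> \<rho>" and "f a = f b"
    obtain x t y s where ab: "a = (x, t)" "b = (y, s)" by (cases a, cases b)
    have "int_vec (\<sigma> *v x)" "int_vec (matrix_inv \<rho> *v t)"
      "int_vec (\<sigma> *v y)" "int_vec (matrix_inv \<rho> *v s)"
      using a b ab mem_lattice_iff[OF inv] by auto
    moreover have "(\<lambda>k. \<lfloor>(\<sigma> *v x) $ k\<rfloor> mod int d) = (\<lambda>k. \<lfloor>(\<sigma> *v y) $ k\<rfloor> mod int d)"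
      "(\<lambda>k. \<lfloor>(matrix_inv \<rho> *v t) $ k\<rfloor> mod int d') = (\<lambda>k. \<lfloor>(matrix_inv \<rho> *v s) $ k\<rfloor> mod int d')"
      using \<open>f a = f b\<close> by (simp_all add: f_def ab)
    ultimately obtain z z' where "int_vec z" "\<sigma> *v x - \<sigma> *v y = real d *\<^sub>R z"
        "int_vec z'" "matrix_inv \<rho> *v t - matrix_inv \<rho> *v s = real d' *\<^sub>R z'"
      using diff_eq_scaleR_if_mod_eq by metis
    then have "Gmult \<Delta> (Ginv \<Delta> b) a \<in> lattice \<nu> \<rho>'"
      unfolding ab using Ginv_mult_mem_lattice_if_congruent[OF comp1 inv' d(2) d'(2)]
        \<open>int_vec (matrix_inv \<rho> *v s)\<close> by blast
    moreover have "Gmult \<Delta> (Ginv \<Delta> b) a \<in> lattice \<sigma> \<rho>"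
      using a b Gsubgroup_lattice[OF comp1] by (simp add: Gsubgroup_def)
    ultimately show "Gmult \<Delta> (Ginv \<Delta> b) a \<in> lattice \<sigma> \<rho> \<inter> lattice \<nu> \<rho>'" by blast
  qed
qed

theorem mainTheorem5:
  fixes \<Delta> :: "'m::finite \<Rightarrow> real^'n::finite^'n"
    and \<sigma> \<nu> :: "real^'n^'n" and \<rho> \<rho>' :: "real^'m^'m"
  assumes "CARD('m) \<le> CARD('n)"
    and diag: "\<forall>i. is_diag_mat (\<Delta> i)"
    and traceless: "\<forall>i. trace (\<Delta> i) = 0"
    and nonsing: "\<forall>i. invertible (\<Delta> i)"
    and linindep: "\<forall>c::'m \<Rightarrow> real. (\<Sum>i\<in>UNIV. c i *\<^sub>R \<Delta> i) = 0 \<longrightarrow> (\<forall>i. c i = 0)"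
    and distinct: "\<forall>i j k. j \<noteq> k \<longrightarrow> \<Delta> i $ j $ j \<noteq> \<Delta> i $ k $ k"
    and comp1: "G_compatible \<Delta> \<sigma> \<rho>"
    and comp2: "G_compatible \<Delta> \<nu> \<rho>'"
  shows "commensurable (Gmult \<Delta>) (lattice \<sigma> \<rho>) (lattice \<nu> \<rho>') \<longleftrightarrow>
           rat_mat (\<nu> ** matrix_inv \<sigma>) \<and> rat_mat (matrix_inv \<rho>' ** \<rho>)"
proof
  assume "commensurable (Gmult \<Delta>) (lattice \<sigma> \<rho>) (lattice \<nu> \<rho>')"
  then show "rat_mat (\<nu> ** matrix_inv \<sigma>) \<and> rat_mat (matrix_inv \<rho>' ** \<rho>)"
    unfolding commensurable_def using rat_mat_if_finite_index[OF comp1 comp2] by blast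
next
  assume rat: "rat_mat (\<nu> ** matrix_inv \<sigma>) \<and> rat_mat (matrix_inv \<rho>' ** \<rho>)"
  have inv: "invertible \<sigma>" "invertible \<rho>" "invertible \<nu>" "invertible \<rho>'"
    using comp1 comp2 by (auto simp: G_compatible_def)
  have "(\<nu> ** matrix_inv \<sigma>) ** (\<sigma> ** matrix_inv \<nu>) = mat 1"
    "(matrix_inv \<rho>' ** \<rho>) ** (matrix_inv \<rho> ** \<rho>') = mat 1"
    by (metis inv matrix_mul_assoc matrix_mul_lid matrix_inv_left matrix_inv_right)+
  then have "rat_mat (\<sigma> ** matrix_inv \<nu>)" "rat_mat (matrix_inv \<rho> ** \<rho>')"
    using rat rat_mat_inverse by blast+
  then show "commensurable (Gmult \<Delta>) (lattice \<sigma> \<rho>) (lattice \<nu> \<rho>')"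
    unfolding commensurable_def using rat finite_index_if_rat_mat[OF comp1 comp2]
      finite_index_if_rat_mat[OF comp2 comp1] by (simp add: Int_commute)
qed

end
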